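(* For every $z\in\mathbb{R}$ there exists a topology $\tau_z\in\mathcal{L}$ with $C(\tau_z)=(-\infty,z]$ such that all spaces $(\mathbb{R},\tau_z)$, $z\in\mathbb{R}$, are completely metrizable and pairwise homeomorphic.
   Context: $\eta$ denotes the Euclidean topology on $\mathbb{R}$. $\mathcal{L}$ denotes the family of all Hausdorff topologies $\tau$ on $\mathbb{R}$ with $\tau\subset\eta$. For $\tau\in\mathcal{L}$ and $a\in\mathbb{R}$ let $\mathcal{N}_\tau(a)$ be the neighborhood filter of $a$ in $(\mathbb{R},\tau)$; $C(\tau)$ is the set of all $a\in\mathbb{R}$ with $\mathcal{N}_\tau(a)\neq\mathcal{N}_\eta(a)$. *)

theory Defs
  imports "HOL-Analysis.Analysis"
begin

definition coarser_Hausdorff :: "real topology \<Rightarrow> bool" where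
  "coarser_Hausdorff \<tau> \<longleftrightarrow>
     topspace \<tau> = UNIV \<and> Hausdorff_space \<tau> \<and> (\<forall>S. openin \<tau> S \<longrightarrow> open S)"

definition C_set :: "real topology \<Rightarrow> real set" where
  "C_set \<tau> = {a. nhdsin \<tau> a \<noteq> nhdsin euclidean a}"

end

theory Submission
  imports Defs
begin

(* The map curve defined below is a continuous injection of the line into the plane that runs
   along the half-axis {..0} \<times> {0} for t \<le> 0 and, for large t, oscillates in the left
   half-plane with height t / (1 + t^2) \<rightarrow> 0, so that its tail accumulates exactly on that
   half-axis. Off the half-axis the preimage of a small ball is bounded, hence curve maps closed
   sets containing {..0} to closed sets; in particular its range is closed in the plane.
   Pulling back the Euclidean topology of the plane along t \<mapsto> curve (t - z) gives a topology
   homeomorphic to this closed set, coarser than the Euclidean one since curve is continuous,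
   and whose neighbourhood filter at a is Euclidean exactly when curve (a - z) is not a limit
   of curve t with t far from a - z, i.e. exactly when a > z. *)

lemma nhdsin_pullback_topology:
  "nhdsin (pullback_topology UNIV f Y) a = filtercomap f (nhdsin Y (f a))"
proof (cases "f a \<in> topspace Y")
  case True
  show ?thesis
  proof (rule filter_eqI)
    fix P
    have "eventually P (nhdsin (pullback_topology UNIV f Y) a) \<longleftrightarrow>
          (\<exists>S. openin (pullback_topology UNIV f Y) S \<and> a \<in> S \<and> (\<forall>x\<in>S. P x))"
      using True by (simp add: eventually_nhdsin topspace_pullback_topology)
    also have "\<dots> \<longleftrightarrow> (\<exists>U. openin Y U \<and> f a \<in> U \<and> (\<forall>x. f x \<in> U \<longrightarrow> P x))"
      unfolding openin_pullback_topology by blast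
    also have "\<dots> \<longleftrightarrow> eventually P (filtercomap f (nhdsin Y (f a)))"
    proof
      assume "\<exists>U. openin Y U \<and> f a \<in> U \<and> (\<forall>x. f x \<in> U \<longrightarrow> P x)"
      then obtain U where "openin Y U" "f a \<in> U" "\<forall>x. f x \<in> U \<longrightarrow> P x"
        by blast
      moreover have "eventually (\<lambda>y. y \<in> U) (nhdsin Y (f a))"
        using \<open>openin Y U\<close> \<open>f a \<in> U\<close> eventually_nhdsin by fastforce
      ultimately show "eventually P (filtercomap f (nhdsin Y (f a)))"
        unfolding eventually_filtercomap by blast
    next
      assume "eventually P (filtercomap f (nhdsin Y (f a)))"
      then obtain Q where "eventually Q (nhdsin Y (f a))" "\<forall>x. Q (f x) \<longrightarrow> P x"
        unfolding eventually_filtercomap by blast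
      then show "\<exists>U. openin Y U \<and> f a \<in> U \<and> (\<forall>x. f x \<in> U \<longrightarrow> P x)"
        using True unfolding eventually_nhdsin by blast
    qed
    finally show "eventually P (nhdsin (pullback_topology UNIV f Y) a) \<longleftrightarrow> \<dots>" .
  qed
qed (simp add: topspace_pullback_topology)

lemma nhdsin_euclidean: "nhdsin euclidean a = nhds a"
  by (simp add: filter_eq_iff eventually_nhdsin eventually_nhds)

lemma homeomorphic_map_pullback_topology:
  assumes "inj_on f A"
  shows "homeomorphic_map (pullback_topology A f Y) (subtopology Y (f ` A)) f"
proof (rule bijective_open_imp_homeomorphic_map)
  show "continuous_map (pullback_topology A f Y) (subtopology Y (f ` A)) f"
    using continuous_map_pullback[of Y Y id A f]
    by (auto simp: continuous_map_in_subtopology topspace_pullback_topology)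
  show "open_map (pullback_topology A f Y) (subtopology Y (f ` A)) f"
    unfolding open_map_def openin_pullback_topology openin_subtopology by auto
  show "f ` topspace (pullback_topology A f Y) = topspace (subtopology Y (f ` A))"
    by (auto simp: topspace_pullback_topology)
  show "inj_on f (topspace (pullback_topology A f Y))"
    using assms by (auto simp: topspace_pullback_topology inj_on_def)
qed

lemma openin_pullback_topology_continuous:
  assumes "continuous_map X Y f" "openin (pullback_topology (topspace X) f Y) S"
  shows "openin X S"
proof -
  obtain U where "openin Y U" "S = f -` U \<inter> topspace X"
    using assms(2) by (auto simp: openin_pullback_topology)
  then have "S = {x \<in> topspace X. f x \<in> U}"
    by auto
  with assms(1) \<open>openin Y U\<close> show ?thesis
    by (simp add: openin_continuous_map_preimage)
qed

lemma filtercomap_nhds_le_nhds_iff: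
  fixes f :: "'a::metric_space \<Rightarrow> 'b::topological_space"
  shows "filtercomap f (nhds (f a)) \<le> nhds a \<longleftrightarrow> (\<forall>e>0. f a \<notin> closure (f ` (- ball a e)))"
proof safe
  fix e :: real assume "filtercomap f (nhds (f a)) \<le> nhds a" "e > 0" "f a \<in> closure (f ` (- ball a e))"
  then have "eventually (\<lambda>x. x \<in> ball a e) (filtercomap f (nhds (f a)))"
    using eventually_nhds_ball filter_leD by blast
  then obtain S where "open S" "f a \<in> S" "\<And>x. f x \<in> S \<Longrightarrow> x \<in> ball a e"
    unfolding eventually_filtercomap_nhds by blast
  then have "S \<inter> f ` (- ball a e) = {}"
    by blast
  then show False
    using \<open>open S\<close> \<open>f a \<in> S\<close> \<open>f a \<in> closure _\<close> open_Int_closure_eq_empty by blast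
next
  assume sep: "\<forall>e>0. f a \<notin> closure (f ` (- ball a e))"
  show "filtercomap f (nhds (f a)) \<le> nhds a"
  proof (rule filter_leI)
    fix P assume "eventually P (nhds a)"
    then obtain S where "open S" "a \<in> S" "\<forall>x\<in>S. P x"
      unfolding eventually_nhds by blast
    then obtain e where "e > 0" "ball a e \<subseteq> S"
      by (meson openE)
    let ?S = "- closure (f ` (- ball a e))"
    have "open ?S"
      by (intro open_Compl closed_closure)
    moreover have "f a \<in> ?S"
      using sep \<open>e > 0\<close> by blast
    moreover have "P x" if "f x \<in> ?S" for x
    proof -
      have "x \<in> ball a e"
        using that closure_subset[of "f ` (- ball a e)"] by blast
      then show "P x"
        using \<open>ball a e \<subseteq> S\<close> \<open>\<forall>x\<in>S. P x\<close> by blast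
    qed
    ultimately show "eventually P (filtercomap f (nhds (f a)))"
      unfolding eventually_filtercomap_nhds by blast
  qed
qed

lemma nhdsin_pullback_euclidean_eq_nhds_iff:
  fixes f :: "'a::metric_space \<Rightarrow> 'b::topological_space"
  assumes "continuous_on UNIV f"
  shows "nhdsin (pullback_topology UNIV f euclidean) a = nhds a \<longleftrightarrow>
           (\<forall>e>0. f a \<notin> closure (f ` (- ball a e)))"
proof -
  have "nhds a \<le> filtercomap f (nhds (f a))"
  proof (rule filter_leI)
    fix P
    assume "eventually P (filtercomap f (nhds (f a)))"
    then obtain S where "open S" "f a \<in> S" "\<And>x. f x \<in> S \<Longrightarrow> P x"
      unfolding eventually_filtercomap_nhds by blast
    moreover have "open (f -` S)"
      using \<open>open S\<close> assms by (rule open_vimage)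
    ultimately show "eventually P (nhds a)"
      unfolding eventually_nhds by (intro exI[of _ "f -` S"]) auto
  qed
  then show ?thesis
    by (simp add: nhdsin_pullback_topology nhdsin_euclidean order.eq_iff filtercomap_nhds_le_nhds_iff)
qed

(* For t \<ge> 1 the factor (1 + cos (pi * t)) / 2 sweeps [0, 1] on every interval [2n, 2n + 1],
   so curve_x attains every a \<le> 0 at arbitrarily large t; for 0 < t < 1 it is positive,
   which separates this loop from the tail and makes curve injective. *)
definition curve_x :: "real \<Rightarrow> real" where
  "curve_x t = t * (1 - max 0 t) * (1 + cos (pi * max 0 t)) / 2"

definition curve_y :: "real \<Rightarrow> real" where
  "curve_y t = max 0 t / (1 + (max 0 t)\<^sup>2)"

definition curve :: "real \<Rightarrow> real \<times> real" where
  "curve t = (curve_x t, curve_y t)"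

lemma continuous_on_curve: "continuous_on UNIV curve"
proof -
  have "1 + (max 0 t)\<^sup>2 \<noteq> 0" for t :: real
    using zero_le_power2[of "max 0 t"] by linarith
  then show ?thesis
    unfolding curve_def curve_x_def curve_y_def by (intro continuous_intros) auto
qed

lemma curve_nonpos: "t \<le> 0 \<Longrightarrow> curve t = (t, 0)"
  by (simp add: curve_def curve_x_def curve_y_def)

lemma curve_image_nonpos: "curve ` {..0} = {..0} \<times> {0}"
  by (force simp: curve_nonpos)

lemma curve_y_nonneg: "0 \<le> curve_y t"
  by (simp add: curve_y_def)

lemma curve_y_pos: "0 < t \<Longrightarrow> 0 < curve_y t"
  by (simp add: curve_y_def add_pos_nonneg)

lemma curve_y_le_inverse: "0 < t \<Longrightarrow> curve_y t \<le> 1 / t"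
  by (simp add: curve_y_def field_simps add_pos_nonneg power2_eq_square)

lemma curve_y_eq_cases:
  assumes "0 < s" "0 < t" "curve_y s = curve_y t"
  shows "s = t \<or> s * t = 1"
proof -
  have "1 + s\<^sup>2 \<noteq> 0" "1 + t\<^sup>2 \<noteq> 0"
    using zero_le_power2[of s] zero_le_power2[of t] by linarith+
  then have "s * (1 + t\<^sup>2) = t * (1 + s\<^sup>2)"
    using assms by (simp add: curve_y_def frac_eq_eq)
  then have "(s - t) * (1 - s * t) = 0"
    by (simp add: algebra_simps power2_eq_square)
  then show ?thesis
    by simp
qed

lemma curve_x_pos:
  assumes t: "0 < t" "t < 1"
  shows "0 < curve_x t"
proof -
  have "cos (pi * t) \<noteq> -1"
  proof
    assume "cos (pi * t) = -1"
    then obtain n :: int where "pi * t = (2 * of_int n + 1) * pi"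
      using cos_eq_minus1 by blast
    then have "t = 2 * of_int n + 1"
      by simp
    with t have "0 < 2 * n + 1" "2 * n + 1 < 1"
      by linarith+
    then show False
      by simp
  qed
  then have "0 < 1 + cos (pi * t)"
    using cos_ge_minus_one[of "pi * t"] by linarith
  with t show ?thesis
    by (simp add: curve_x_def)
qed

lemma curve_x_nonpos:
  assumes "1 \<le> t"
  shows "curve_x t \<le> 0"
proof -
  have "t * (1 - t) \<le> 0"
    using assms by (simp add: mult_nonneg_nonpos)
  moreover have "0 \<le> 1 + cos (pi * t)"
    using cos_ge_minus_one[of "pi * t"] by linarith
  ultimately show ?thesis
    using assms by (simp add: curve_x_def mult_nonpos_nonneg)
qed

lemma inj_curve: "inj curve"
proof (rule injI)
  fix s t :: real
  assume "curve s = curve t"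
  then have x: "curve_x s = curve_x t" and y: "curve_y s = curve_y t"
    by (simp_all add: curve_def)
  show "s = t"
  proof (cases "s \<le> 0 \<or> t \<le> 0")
    case True
    then have "s \<le> 0 \<and> t \<le> 0"
      using y curve_y_pos[of s] curve_y_pos[of t] curve_nonpos[of s] curve_nonpos[of t]
      by (force simp: curve_def)
    then show ?thesis
      using \<open>curve s = curve t\<close> by (simp add: curve_nonpos)
  next
    case False
    then have "0 < s" "0 < t"
      by auto
    show ?thesis
    proof (rule ccontr)
      assume "s \<noteq> t"
      then have "s * t = 1"
        using curve_y_eq_cases[OF \<open>0 < s\<close> \<open>0 < t\<close> y] by blast
      then have t: "t = 1 / s"
        using \<open>0 < s\<close> by (simp add: field_simps)
      then have "s \<noteq> 1"
        using \<open>s \<noteq> t\<close> by auto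
      then consider "s < 1" "1 < t" | "1 < s" "t < 1"
        using \<open>0 < s\<close> unfolding t by (meson linorder_neqE less_divide_eq_1_pos divide_less_eq_1_pos)
      then show False
      proof cases
        case 1
        then show False
          using x curve_x_pos[OF \<open>0 < s\<close>] curve_x_nonpos[of t] by simp
      next
        case 2
        then show False
          using x curve_x_pos[OF \<open>0 < t\<close>] curve_x_nonpos[of s] by simp
      qed
    qed
  qed
qed

lemma curve_x_attains_nonpos:
  assumes "a \<le> 0"
  shows "\<exists>t\<ge>M. curve_x t = a"
proof -
  obtain n :: nat where n: "\<bar>M\<bar> + \<bar>a\<bar> + 1 \<le> real n"
    using real_arch_simple by blast
  define T where "T = 2 * real n"
  have "1 \<le> T" "M \<le> T" "1 - a \<le> T"
    using n by (auto simp: T_def)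
  have "cos (pi * T) = 1"
    using cos_2npi[of n] by (simp add: T_def mult.commute)
  then have "curve_x T = T * (1 - T)"
    using \<open>1 \<le> T\<close> by (simp add: curve_x_def)
  also have "\<dots> \<le> 1 - T"
    using \<open>1 \<le> T\<close> mult_right_mono_neg[of 1 T "1 - T"] by simp
  finally have "curve_x T \<le> a"
    using \<open>1 - a \<le> T\<close> by linarith
  moreover have "cos (pi * (T + 1)) = -1"
    using \<open>cos (pi * T) = 1\<close> by (simp add: distrib_left)
  then have "a \<le> curve_x (T + 1)"
    using \<open>1 \<le> T\<close> assms by (simp add: curve_x_def)
  moreover have "continuous_on {T..T + 1} curve_x"
    unfolding curve_x_def by (intro continuous_intros) auto
  ultimately obtain t where "T \<le> t" "curve_x t = a"
    using IVT'[of curve_x T a "T + 1"] by auto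
  then show ?thesis
    using \<open>M \<le> T\<close> by (intro exI[of _ t]) auto
qed

lemma curve_in_closure_tail:
  assumes "a \<le> 0"
  shows "curve a \<in> closure (curve ` {M..})"
  unfolding closure_approachable
proof (intro allI impI)
  fix e :: real
  assume "0 < e"
  obtain t where "max M (max 1 (1 / e + 1)) \<le> t" "curve_x t = a"
    using curve_x_attains_nonpos[OF assms] by blast
  then have "M \<le> t" "0 < t" "1 / e < t"
    by auto
  have "curve t = (a, curve_y t)"
    using \<open>curve_x t = a\<close> by (simp add: curve_def)
  with curve_nonpos[OF assms] have "dist (curve t) (curve a) = curve_y t"
    by (simp add: dist_Pair_Pair dist_real_def curve_y_nonneg)
  also have "\<dots> \<le> 1 / t"
    using \<open>0 < t\<close> by (rule curve_y_le_inverse)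
  also have "\<dots> < e"
    using \<open>0 < e\<close> \<open>0 < t\<close> \<open>1 / e < t\<close> by (simp add: field_simps)
  finally show "\<exists>y\<in>curve ` {M..}. dist y (curve a) < e"
    using \<open>M \<le> t\<close> by auto
qed

lemma curve_vimage_ball_bounded:
  assumes "l \<notin> {..0} \<times> {0}"
  shows "\<exists>r>0. \<exists>B N. curve -` ball l r \<subseteq> {B..N}"
proof -
  obtain l1 l2 where l: "l = (l1, l2)"
    by fastforce
  have fst_le: "\<bar>curve_x t - l1\<bar> \<le> dist (curve t) l" and snd_le: "\<bar>curve_y t - l2\<bar> \<le> dist (curve t) l" for t
    using dist_fst_le[of "curve t" l] dist_snd_le[of "curve t" l] by (simp_all add: curve_def l dist_real_def)
  have left: "1 \<le> dist (curve t) l" if "t < - \<bar>l1\<bar> - 1" for t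
    using that fst_le[of t] curve_nonpos[of t] by (simp add: curve_def)
  obtain r N where "0 < r" "r \<le> 1" and right: "\<And>t. N < t \<Longrightarrow> r \<le> dist (curve t) l"
  proof (cases "0 < l1")
    case True
    have "min 1 l1 \<le> dist (curve t) l" if "1 < t" for t
      using that curve_x_nonpos[of t] fst_le[of t] by simp
    then show ?thesis
      using True that[of "min 1 l1" 1] by simp
  next
    case False
    then have "l2 \<noteq> 0"
      using assms l by auto
    have "min 1 (\<bar>l2\<bar> / 2) \<le> dist (curve t) l" if "2 / \<bar>l2\<bar> < t" for t
    proof -
      have "0 < 2 / \<bar>l2\<bar>"
        using \<open>l2 \<noteq> 0\<close> by simp
      then have "0 < t"
        using that by linarith
      moreover have "1 / t < \<bar>l2\<bar> / 2"
        using that \<open>0 < t\<close> \<open>l2 \<noteq> 0\<close> by (simp add: field_simps)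
      ultimately have "curve_y t < \<bar>l2\<bar> / 2"
        using curve_y_le_inverse[of t] by linarith
      then show ?thesis
        using snd_le[of t] curve_y_nonneg[of t] by linarith
    qed
    then show ?thesis
      using \<open>l2 \<noteq> 0\<close> that[of "min 1 (\<bar>l2\<bar> / 2)" "2 / \<bar>l2\<bar>"] by simp
  qed
  have "curve -` ball l r \<subseteq> {- \<bar>l1\<bar> - 1..N}"
  proof
    fix t
    assume "t \<in> curve -` ball l r"
    then have "dist (curve t) l < r"
      by (simp add: dist_commute)
    then show "t \<in> {- \<bar>l1\<bar> - 1..N}"
      using left[of t] right[of t] \<open>r \<le> 1\<close> by force
  qed
  then show ?thesis
    using \<open>0 < r\<close> by blast
qed

lemma closed_curve_image:
  assumes "closed C" "{..0} \<subseteq> C"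
  shows "closed (curve ` C)"
proof -
  have "l \<in> curve ` C" if "l \<in> closure (curve ` C)" for l
  proof (cases "l \<in> {..0} \<times> {0}")
    case True
    then show ?thesis
      using assms(2) curve_image_nonpos by blast
  next
    case False
    then obtain r B N where "0 < r" and bounded: "curve -` ball l r \<subseteq> {B..N}"
      using curve_vimage_ball_bounded by blast
    let ?K = "curve ` (C \<inter> {B..N})"
    have "compact ?K"
      using assms(1) continuous_on_curve
      by (intro compact_continuous_image closed_Int_compact) (auto intro: continuous_on_subset)
    have "l \<in> ball l r \<inter> closure (curve ` C)"
      using that \<open>0 < r\<close> by simp
    also have "\<dots> \<subseteq> closure (ball l r \<inter> curve ` C)"
      by (simp add: open_Int_closure_subset)
    also have "\<dots> \<subseteq> closure ?K"
      using bounded by (intro closure_mono) fastforce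
    also have "\<dots> = ?K"
      using \<open>compact ?K\<close> by (simp add: compact_imp_closed)
    finally show ?thesis
      by blast
  qed
  then show ?thesis
    using closure_subset_eq closure_subset by blast
qed

definition curve_topology :: "real \<Rightarrow> real topology" where
  "curve_topology z = pullback_topology UNIV (\<lambda>t. curve (t - z)) euclidean"

lemma continuous_on_shifted_curve: "continuous_on UNIV (\<lambda>t. curve (t - z))"
  by (intro continuous_on_compose2[OF continuous_on_curve]) (auto intro: continuous_intros)

lemma range_shifted_curve: "range (\<lambda>t. curve (t - z)) = range curve"
proof
  show "range curve \<subseteq> range (\<lambda>t. curve (t - z))"
  proof
    fix p
    assume "p \<in> range curve"
    then obtain u where "p = curve u"
      by blast
    then show "p \<in> range (\<lambda>t. curve (t - z))"
      by (intro image_eqI[of _ _ "u + z"]) auto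
  qed
qed auto

lemma curve_topology_homeomorphic: "curve_topology z homeomorphic_space top_of_set (range curve)"
proof -
  have "inj (\<lambda>t. curve (t - z))"
  proof (rule injI)
    fix x y
    assume "curve (x - z) = curve (y - z)"
    then have "x - z = y - z"
      by (rule injD[OF inj_curve])
    then show "x = y"
      by simp
  qed
  then have "homeomorphic_map (curve_topology z) (top_of_set (range (\<lambda>t. curve (t - z)))) (\<lambda>t. curve (t - z))"
    unfolding curve_topology_def by (rule homeomorphic_map_pullback_topology)
  then show ?thesis
    unfolding range_shifted_curve by (rule homeomorphic_map_imp_homeomorphic_space)
qed

lemma coarser_Hausdorff_curve_topology: "coarser_Hausdorff (curve_topology z)"
  unfolding coarser_Hausdorff_def
proof (intro conjI allI impI)
  show "topspace (curve_topology z) = UNIV"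
    by (simp add: curve_topology_def topspace_pullback_topology)
  show "Hausdorff_space (curve_topology z)"
    using homeomorphic_Hausdorff_space[OF curve_topology_homeomorphic]
      Hausdorff_space_subtopology[OF Hausdorff_space_euclidean] by blast
  fix S
  assume "openin (curve_topology z) S"
  then show "open S"
    using openin_pullback_topology_continuous[of euclidean euclidean "\<lambda>t. curve (t - z)" S]
      continuous_on_shifted_curve by (simp add: curve_topology_def)
qed

lemma completely_metrizable_curve_topology: "completely_metrizable_space (curve_topology z)"
proof -
  have "closed (range curve)"
    using closed_curve_image[of UNIV] by simp
  then have "completely_metrizable_space (top_of_set (range curve))"
    unfolding closed_closedin
    by (rule completely_metrizable_space_closedin[OF completely_metrizable_space_euclidean])
  then show ?thesis
    by (rule homeomorphic_completely_metrizable_space[OF curve_topology_homeomorphic, THEN iffD2])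
qed

lemma C_set_curve_topology: "C_set (curve_topology z) = {..z}"
proof -
  let ?G = "\<lambda>t. curve (t - z)"
  have C_iff: "a \<in> C_set (curve_topology z) \<longleftrightarrow> (\<exists>e>0. ?G a \<in> closure (?G ` (- ball a e)))" for a
    unfolding C_set_def curve_topology_def nhdsin_euclidean mem_Collect_eq
    by (simp add: nhdsin_pullback_euclidean_eq_nhds_iff[OF continuous_on_shifted_curve])
  have on_axis: "?G a \<in> closure (?G ` (- ball a 1))" if "a \<le> z" for a
  proof -
    have "curve ` {a - z + 1..} \<subseteq> ?G ` (- ball a 1)"
    proof
      fix p
      assume "p \<in> curve ` {a - z + 1..}"
      then obtain t where "a - z + 1 \<le> t" "p = curve t"
        by auto
      then show "p \<in> ?G ` (- ball a 1)"
        by (intro image_eqI[of _ _ "t + z"]) (auto simp: dist_real_def)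
    qed
    then have "closure (curve ` {a - z + 1..}) \<subseteq> closure (?G ` (- ball a 1))"
      by (rule closure_mono)
    then show ?thesis
      using curve_in_closure_tail[of "a - z" "a - z + 1"] that by auto
  qed
  have off_axis: "?G a \<notin> closure (?G ` (- ball a e))" if "z < a" "0 < e" for a e
  proof -
    define d where "d = min e (a - z)"
    have "0 < d" "d \<le> e"
      using that by (auto simp: d_def)
    have "?G ` (- ball a e) \<subseteq> curve ` (- ball (a - z) d)"
    proof
      fix p
      assume "p \<in> ?G ` (- ball a e)"
      then obtain t where "t \<notin> ball a e" "p = curve (t - z)"
        by auto
      then show "p \<in> curve ` (- ball (a - z) d)"
        using \<open>d \<le> e\<close> by (intro image_eqI[of _ _ "t - z"]) (auto simp: dist_real_def)
    qed
    moreover have "closed (curve ` (- ball (a - z) d))"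
      by (rule closed_curve_image) (auto simp: d_def dist_real_def)
    ultimately have "closure (?G ` (- ball a e)) \<subseteq> curve ` (- ball (a - z) d)"
      by (simp add: closure_minimal)
    moreover have "curve (a - z) \<notin> curve ` (- ball (a - z) d)"
      using \<open>0 < d\<close> inj_curve by (auto simp: inj_eq)
    ultimately show ?thesis
      by blast
  qed
  show ?thesis
  proof (rule set_eqI)
    fix a
    show "a \<in> C_set (curve_topology z) \<longleftrightarrow> a \<in> {..z}"
      using C_iff[of a] on_axis[of a] off_axis[of a] by (cases "a \<le> z") auto
  qed
qed

theorem proposition5:
  shows "\<exists>T :: real \<Rightarrow> real topology.
           (\<forall>z. coarser_Hausdorff (T z) \<and> C_set (T z) = {..z} \<and>
                completely_metrizable_space (T z)) \<and>
           (\<forall>z w. T z homeomorphic_space T w)"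
proof (intro exI[of _ curve_topology] conjI allI)
  fix z w
  show "coarser_Hausdorff (curve_topology z)"
    by (rule coarser_Hausdorff_curve_topology)
  show "C_set (curve_topology z) = {..z}"
    by (rule C_set_curve_topology)
  show "completely_metrizable_space (curve_topology z)"
    by (rule completely_metrizable_curve_topology)
  show "curve_topology z homeomorphic_space curve_topology w"
    using curve_topology_homeomorphic[of z] curve_topology_homeomorphic[of w]
    by (meson homeomorphic_space_sym homeomorphic_space_trans)
qed

end
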